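(* Let $\mathbf c=\{c_n\}_{n=1}^{\infty}$ be a complex $O$-regularly varying quasimonotone sequence with $\lim_{n\to\infty}c_n=0$. Then there exist a natural number $N_0$ and a constant $M>0$ such that $$\sum_{n=m}^{2m}|c_n-c_{n+1}|\le M\max_{m\le n<m+N_0}|c_n|\qquad\text{for all } m=1,2,\dots.$$
   Context: A sequence $\{R(n)\}$ is $O$-regularly varying if it is non-decreasing, positive, and $\limsup_{n\to\infty}R(2n)/R(n)<\infty$. For $\theta\in[0,\pi/2]$, $K(\theta)=\{z\in\mathbb C:|\arg z|\le\theta\}$. A complex sequence $\{c_n\}$ is $O$-regularly varying quasimonotone (in the complex sense) if for some $\theta_0\in[0,\pi/2)$ and some $O$-regularly varying sequence $\{R(n)\}$ one has $\frac{c_n}{R(n)}-\frac{c_{n+1}}{R(n+1)}\in K(\theta_0)$ for all $n$. *)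

theory Defs
  imports "HOL-Analysis.Analysis" "HOL-Complex_Analysis.Complex_Analysis"
begin

text \<open>Sequences are indexed from 1; values at index 0 are irrelevant.\<close>

definition O_regularly_varying :: "(nat \<Rightarrow> real) \<Rightarrow> bool" where
  "O_regularly_varying R \<longleftrightarrow>
     (\<forall>n\<ge>1. R n \<le> R (Suc n)) \<and> (\<forall>n\<ge>1. R n > 0) \<and>
     limsup (\<lambda>n. ereal (R (2*n) / R n)) < \<infinity>"

definition sector :: "real \<Rightarrow> complex set" where
  "sector \<theta> = {z. \<bar>Arg z\<bar> \<le> \<theta>}"

definition ORV_quasimonotone :: "(nat \<Rightarrow> complex) \<Rightarrow> bool" where
  "ORV_quasimonotone c \<longleftrightarrow>
     (\<exists>\<theta>0 R. 0 \<le> \<theta>0 \<and> \<theta>0 < pi/2 \<and> O_regularly_varying R \<and>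
        (\<forall>n\<ge>1. c n / complex_of_real (R n) - c (Suc n) / complex_of_real (R (Suc n)) \<in> sector \<theta>0))"

end

theory Submission
  imports Defs
begin

text \<open>
  Put \<open>d n = c n / R n\<close>. Quasimonotonicity says that every step \<open>d n - d (n+1)\<close> lies in
  the closed additive cone \<open>|z| cos \<theta>0 \<le> Re z\<close>; since \<open>d \<longlonglongrightarrow> 0\<close>, telescoping puts every
  \<open>d n\<close> into that cone as well and makes \<open>Re d\<close> nonincreasing. Writing \<open>c = R d\<close>, the bound
  \<open>|c k - c (k+1)| \<le> R k |d k - d (k+1)| + (R (k+1) - R k) |d (k+1)|\<close> turns each term into
  \<open>(R (2m+1) Re (d k - d (k+1)) + (R (k+1) - R k) Re (d m)) / cos \<theta>0\<close>, and the sum over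
  \<open>m \<le> k \<le> 2m\<close> telescopes to at most \<open>2 R (2m+1) |d m| / cos \<theta>0 = 2 (R (2m+1) / R m) |c m| / cos \<theta>0\<close>.
  O-regular variation bounds \<open>R (2m+1) / R m\<close>, so already \<open>N0 = 1\<close> works.
\<close>

definition Re_cone :: "real \<Rightarrow> complex set" where
  "Re_cone \<delta> = {z. cmod z * \<delta> \<le> Re z}"

lemma sector_subset_Re_cone:
  assumes "\<theta> \<le> pi"
  shows "sector \<theta> \<subseteq> Re_cone (cos \<theta>)"
proof
  fix z assume "z \<in> sector \<theta>"
  then have Arg_le: "\<bar>Arg z\<bar> \<le> \<theta>" by (simp add: sector_def)
  show "z \<in> Re_cone (cos \<theta>)"
  proof (cases "z = 0")
    case False
    have "cos \<theta> \<le> cos \<bar>Arg z\<bar>"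
      using Arg_le assms by (intro cos_monotone_0_pi_le) auto
    then have "cmod z * cos \<theta> \<le> cmod z * cos (Arg z)"
      by (simp add: mult_left_mono)
    also have "\<dots> = Re z"
      using False by (simp add: cos_Arg)
    finally show ?thesis by (simp add: Re_cone_def)
  qed (simp add: Re_cone_def)
qed

lemma Re_cone_add:
  assumes "0 \<le> \<delta>" "x \<in> Re_cone \<delta>" "y \<in> Re_cone \<delta>"
  shows "x + y \<in> Re_cone \<delta>"
proof -
  have "cmod (x + y) * \<delta> \<le> (cmod x + cmod y) * \<delta>"
    using assms(1) norm_triangle_ineq by (rule mult_right_mono[rotated])
  then show ?thesis
    using assms(2,3) by (simp add: Re_cone_def distrib_right)
qed

lemma sum_in_Re_cone:
  assumes "0 \<le> \<delta>" "\<And>i. i \<in> A \<Longrightarrow> f i \<in> Re_cone \<delta>"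
  shows "sum f A \<in> Re_cone \<delta>"
  using assms(2)
proof (induction A rule: infinite_finite_induct)
  case (insert x F)
  then show ?case by (simp add: Re_cone_add[OF assms(1)])
qed (simp_all add: Re_cone_def)

lemma closed_Re_cone: "closed (Re_cone \<delta>)"
  unfolding Re_cone_def by (intro closed_Collect_le continuous_intros)

lemma Re_nonneg_of_Re_cone:
  assumes "z \<in> Re_cone \<delta>" "0 \<le> \<delta>"
  shows "0 \<le> Re z"
proof -
  have "0 \<le> cmod z * \<delta>" using assms(2) by simp
  also have "\<dots> \<le> Re z" using assms(1) by (simp add: Re_cone_def)
  finally show ?thesis .
qed

lemma telescope_in_Re_cone:
  assumes "0 \<le> \<delta>" and steps: "\<And>n. k \<le> n \<Longrightarrow> d n - d (Suc n) \<in> Re_cone \<delta>"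
    and "k \<le> n" "n \<le> m"
  shows "d n - d m \<in> Re_cone \<delta>"
proof -
  have "d n - d m = (\<Sum>i=n..<m. (- d (Suc i)) - (- d i))"
    using sum_Suc_diff'[of n m "\<lambda>i. - d i"] \<open>n \<le> m\<close> by simp
  also have "\<dots> \<in> Re_cone \<delta>"
    using assms by (intro sum_in_Re_cone) auto
  finally show ?thesis .
qed

lemma in_Re_cone_of_steps:
  assumes "0 \<le> \<delta>" and steps: "\<And>n. k \<le> n \<Longrightarrow> d n - d (Suc n) \<in> Re_cone \<delta>"
    and "d \<longlonglongrightarrow> 0" "k \<le> n"
  shows "d n \<in> Re_cone \<delta>"
proof (rule Lim_in_closed_set[OF closed_Re_cone])
  show "\<forall>\<^sub>F m in sequentially. d n - d m \<in> Re_cone \<delta>"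
    using telescope_in_Re_cone[of \<delta> k d n] assms
    by (auto simp: eventually_sequentially)
  show "(\<lambda>m. d n - d m) \<longlonglongrightarrow> d n"
    using tendsto_diff[OF tendsto_const \<open>d \<longlonglongrightarrow> 0\<close>] by simp
qed simp

lemma lift_Suc_mono_le_from:
  fixes f :: "nat \<Rightarrow> 'a::order"
  assumes "\<And>n. k \<le> n \<Longrightarrow> f n \<le> f (Suc n)" "k \<le> n" "n \<le> n'"
  shows "f n \<le> f n'"
  using lift_Suc_mono_le[of "\<lambda>i. f (k + i)" "n - k" "n' - k"] assms by simp

lemma norm_scaleR_diff_le:
  fixes x y :: "'a::real_normed_vector"
  assumes "0 \<le> a" "a \<le> b"
  shows "norm (a *\<^sub>R x - b *\<^sub>R y) \<le> a * norm (x - y) + (b - a) * norm y"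
proof -
  have "a *\<^sub>R x - b *\<^sub>R y = a *\<^sub>R (x - y) - (b - a) *\<^sub>R y"
    by (simp add: algebra_simps)
  then show ?thesis
    using norm_triangle_ineq4[of "a *\<^sub>R (x - y)" "(b - a) *\<^sub>R y"] assms by simp
qed

lemma O_regularly_varying_doubling_bound:
  assumes "O_regularly_varying R"
  obtains C where "C > 0" "\<And>n. 1 \<le> n \<Longrightarrow> R (Suc (2 * n)) \<le> C * R n"
proof -
  have R_step: "\<And>n. 1 \<le> n \<Longrightarrow> R n \<le> R (Suc n)" and R_pos: "\<And>n. 1 \<le> n \<Longrightarrow> 0 < R n"
    and R_ratio: "limsup (\<lambda>n. ereal (R (2 * n) / R n)) < \<infinity>"
    using assms by (auto simp: O_regularly_varying_def)
  have R_mono: "R a \<le> R b" if "1 \<le> a" "a \<le> b" for a b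
    using lift_Suc_mono_le_from[where k = 1 and f = R, OF R_step] that by blast
  obtain C where C: "\<And>n. R (2 * n) / R n \<le> C"
    using limsup_finite_then_bounded[OF R_ratio] by blast
  have double: "R (2 * n) \<le> C * R n" if "1 \<le> n" for n
    using C[of n] R_pos[OF that] by (simp add: divide_le_eq)
  have "1 \<le> R 2 / R 1"
    using R_mono[of 1 2] R_pos[of 1] by simp
  then have "1 \<le> C"
    using C[of 1] by simp
  have "R (Suc (2 * n)) \<le> C * C * R n" if "1 \<le> n" for n
  proof -
    have "R (Suc (2 * n)) \<le> R (2 * Suc n)" using R_mono[of "Suc (2 * n)"] by simp
    also have "\<dots> \<le> C * R (Suc n)" using double[of "Suc n"] by simp
    also have "\<dots> \<le> C * R (2 * n)"
      using R_mono[of "Suc n" "2 * n"] that \<open>1 \<le> C\<close> by (intro mult_left_mono) auto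
    also have "\<dots> \<le> C * (C * R n)"
      using double[OF that] \<open>1 \<le> C\<close> by (intro mult_left_mono) auto
    finally show ?thesis by simp
  qed
  then show thesis
    using that[of "C * C"] \<open>1 \<le> C\<close> by simp
qed

lemma variation_bound_of_Re_cone_steps:
  fixes R :: "nat \<Rightarrow> real" and d :: "nat \<Rightarrow> complex"
  assumes R_step: "\<And>n. 1 \<le> n \<Longrightarrow> R n \<le> R (Suc n)" and R_pos: "\<And>n. 1 \<le> n \<Longrightarrow> 0 < R n"
    and "0 < \<delta>" and steps: "\<And>n. 1 \<le> n \<Longrightarrow> d n - d (Suc n) \<in> Re_cone \<delta>"
    and "d \<longlonglongrightarrow> 0" and "1 \<le> m" "m \<le> N"
  shows "\<delta> * (\<Sum>k=m..N. cmod (R k * d k - R (Suc k) * d (Suc k))) \<le> 2 * R (Suc N) * cmod (d m)"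
proof -
  have R_mono: "R a \<le> R b" if "1 \<le> a" "a \<le> b" for a b
    using lift_Suc_mono_le_from[where k = 1 and f = R, OF R_step] that by blast
  have d_cone: "d n \<in> Re_cone \<delta>" if "1 \<le> n" for n
    using in_Re_cone_of_steps[of \<delta> 1 d n] assms that by simp
  have Re_anti: "Re (d n') \<le> Re (d n)" if "1 \<le> n" "n \<le> n'" for n n'
    using Re_nonneg_of_Re_cone[OF telescope_in_Re_cone[of \<delta> 1 d n n']] assms that by simp
  have step_bound: "\<delta> * cmod (R k * d k - R (Suc k) * d (Suc k))
      \<le> R (Suc N) * Re (d k - d (Suc k)) + (R (Suc k) - R k) * Re (d m)"
    if k: "k \<in> {m..N}" for k
  proof -
    have "1 \<le> k" "0 \<le> R k" "R k \<le> R (Suc k)"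
      using k \<open>1 \<le> m\<close> R_pos[of k] R_step[of k] by auto
    have "cmod (R k * d k - R (Suc k) * d (Suc k))
        \<le> R k * cmod (d k - d (Suc k)) + (R (Suc k) - R k) * cmod (d (Suc k))"
      using norm_scaleR_diff_le[OF \<open>0 \<le> R k\<close> \<open>R k \<le> R (Suc k)\<close>, of "d k" "d (Suc k)"]
      unfolding scaleR_conv_of_real .
    then have "\<delta> * cmod (R k * d k - R (Suc k) * d (Suc k))
        \<le> \<delta> * (R k * cmod (d k - d (Suc k)) + (R (Suc k) - R k) * cmod (d (Suc k)))"
      using \<open>0 < \<delta>\<close> by (intro mult_left_mono) auto
    also have "\<dots> = R k * (cmod (d k - d (Suc k)) * \<delta>) + (R (Suc k) - R k) * (cmod (d (Suc k)) * \<delta>)"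
      by (simp add: algebra_simps)
    also have "\<dots> \<le> R k * Re (d k - d (Suc k)) + (R (Suc k) - R k) * Re (d (Suc k))"
      using steps[OF \<open>1 \<le> k\<close>] d_cone[of "Suc k"] \<open>0 \<le> R k\<close> \<open>R k \<le> R (Suc k)\<close>
      by (intro add_mono mult_left_mono) (auto simp: Re_cone_def)
    also have "\<dots> \<le> R (Suc N) * Re (d k - d (Suc k)) + (R (Suc k) - R k) * Re (d m)"
      using R_mono[of k "Suc N"] Re_anti[of m "Suc k"] Re_nonneg_of_Re_cone[OF steps[OF \<open>1 \<le> k\<close>]]
        k \<open>1 \<le> m\<close> \<open>0 < \<delta>\<close> \<open>R k \<le> R (Suc k)\<close>
      by (intro add_mono mult_right_mono mult_left_mono) auto
    finally show ?thesis .
  qed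
  have "\<delta> * (\<Sum>k=m..N. cmod (R k * d k - R (Suc k) * d (Suc k)))
      \<le> (\<Sum>k=m..N. R (Suc N) * Re (d k - d (Suc k)) + (R (Suc k) - R k) * Re (d m))"
    unfolding sum_distrib_left by (rule sum_mono) (rule step_bound)
  also have "\<dots> = R (Suc N) * (\<Sum>k=m..N. (- Re (d (Suc k))) - (- Re (d k)))
      + (\<Sum>k=m..N. R (Suc k) - R k) * Re (d m)"
    by (simp add: sum.distrib sum_distrib_left sum_distrib_right)
  also have "\<dots> = R (Suc N) * (Re (d m) - Re (d (Suc N))) + (R (Suc N) - R m) * Re (d m)"
    using sum_Suc_diff[of m N "\<lambda>k. - Re (d k)"] sum_Suc_diff[of m N R] \<open>m \<le> N\<close> by simp
  also have "\<dots> \<le> 2 * R (Suc N) * Re (d m)"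
    using Re_nonneg_of_Re_cone[OF d_cone] R_pos \<open>1 \<le> m\<close> \<open>0 < \<delta>\<close>
    by (simp add: algebra_simps add_increasing mult_nonneg_nonneg less_imp_le)
  also have "\<dots> \<le> 2 * R (Suc N) * cmod (d m)"
    using R_pos[of "Suc N"] complex_Re_le_cmod[of "d m"] by (intro mult_left_mono) auto
  finally show ?thesis .
qed

lemma tendsto_zero_divide_bounded_below:
  fixes c :: "nat \<Rightarrow> complex"
  assumes "c \<longlonglongrightarrow> 0" "0 < b" "\<And>n. 1 \<le> n \<Longrightarrow> b \<le> R n"
  shows "(\<lambda>n. c n / complex_of_real (R n)) \<longlonglongrightarrow> 0"
proof (rule Lim_null_comparison)
  show "\<forall>\<^sub>F n in sequentially. norm (c n / complex_of_real (R n)) \<le> norm (c n) / b"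
    unfolding eventually_sequentially
  proof (intro exI allI impI)
    fix n :: nat assume "1 \<le> n"
    then have "norm (c n) / \<bar>R n\<bar> \<le> norm (c n) / b"
      using assms(2) assms(3)[of n] by (intro divide_left_mono) auto
    then show "norm (c n / complex_of_real (R n)) \<le> norm (c n) / b"
      by (simp add: norm_divide)
  qed
  show "(\<lambda>n. norm (c n) / b) \<longlonglongrightarrow> 0"
    using tendsto_divide_zero[OF tendsto_norm_zero[OF assms(1)]] by simp
qed

lemma ORV_quasimonotone_variation_bound:
  assumes "ORV_quasimonotone c" "c \<longlonglongrightarrow> 0"
  obtains M where "M > 0" "\<And>m. 1 \<le> m \<Longrightarrow> (\<Sum>n=m..2*m. cmod (c n - c (Suc n))) \<le> M * cmod (c m)"
proof -
  obtain \<theta>0 R where "0 \<le> \<theta>0" "\<theta>0 < pi/2" and ORV: "O_regularly_varying R"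
    and quasi: "\<And>n. 1 \<le> n \<Longrightarrow> c n / R n - c (Suc n) / R (Suc n) \<in> sector \<theta>0"
    using assms(1) unfolding ORV_quasimonotone_def by blast
  have R_step: "\<And>n. 1 \<le> n \<Longrightarrow> R n \<le> R (Suc n)" and R_pos: "\<And>n. 1 \<le> n \<Longrightarrow> 0 < R n"
    using ORV by (auto simp: O_regularly_varying_def)
  obtain C where "C > 0" and C: "\<And>n. 1 \<le> n \<Longrightarrow> R (Suc (2 * n)) \<le> C * R n"
    using O_regularly_varying_doubling_bound[OF ORV] by blast
  define \<delta> where "\<delta> = cos \<theta>0"
  define d where "d n = c n / complex_of_real (R n)" for n
  have "0 < \<delta>"
    unfolding \<delta>_def using \<open>0 \<le> \<theta>0\<close> \<open>\<theta>0 < pi/2\<close> by (intro cos_gt_zero_pi) auto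
  have "sector \<theta>0 \<subseteq> Re_cone \<delta>"
    unfolding \<delta>_def using \<open>\<theta>0 < pi/2\<close> pi_gt_zero by (intro sector_subset_Re_cone) linarith
  then have steps: "\<And>n. 1 \<le> n \<Longrightarrow> d n - d (Suc n) \<in> Re_cone \<delta>"
    using quasi unfolding d_def by blast
  have "d \<longlonglongrightarrow> 0"
    unfolding d_def using lift_Suc_mono_le_from[where k = 1 and f = R, OF R_step] R_pos[of 1]
    by (intro tendsto_zero_divide_bounded_below[OF assms(2), of "R 1"]) auto
  have c_eq: "c n = R n * d n" if "1 \<le> n" for n
    using R_pos[OF that] by (simp add: d_def)
  have "(\<Sum>n=m..2*m. cmod (c n - c (Suc n))) \<le> (2 * C / \<delta>) * cmod (c m)" if "1 \<le> m" for m
  proof -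
    have "(\<Sum>n=m..2*m. cmod (c n - c (Suc n))) = (\<Sum>n=m..2*m. cmod (R n * d n - R (Suc n) * d (Suc n)))"
      using that by (intro sum.cong) (simp_all add: c_eq)
    also have "\<delta> * \<dots> \<le> 2 * R (Suc (2*m)) * cmod (d m)"
      using variation_bound_of_Re_cone_steps[where N = "2 * m"] R_step R_pos \<open>0 < \<delta>\<close> steps
        \<open>d \<longlonglongrightarrow> 0\<close> that
      by simp
    also have "\<dots> = 2 * (R (Suc (2*m)) / R m) * cmod (c m)"
      using R_pos[OF that] by (simp add: d_def norm_divide)
    also have "\<dots> \<le> 2 * C * cmod (c m)"
      using C[OF that] R_pos[OF that]
      by (intro mult_right_mono mult_left_mono) (auto simp: divide_le_eq)
    finally show ?thesis using \<open>0 < \<delta>\<close> by (simp add: field_simps)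
  qed
  then show thesis
    using that[of "2 * C / \<delta>"] \<open>0 < C\<close> \<open>0 < \<delta>\<close> by simp
qed

theorem mainTheorem5:
  fixes c :: "nat \<Rightarrow> complex"
  assumes "ORV_quasimonotone c"
    and "c \<longlonglongrightarrow> 0"
  shows "\<exists>N0::nat. N0 \<ge> 1 \<and> (\<exists>M::real. M > 0 \<and>
           (\<forall>m\<ge>1. (\<Sum>n=m..2*m. cmod (c n - c (Suc n)))
                     \<le> M * Max ((\<lambda>n. cmod (c n)) ` {m..<m+N0})))"
proof -
  obtain M where "M > 0" "\<And>m. 1 \<le> m \<Longrightarrow> (\<Sum>n=m..2*m. cmod (c n - c (Suc n))) \<le> M * cmod (c m)"
    using ORV_quasimonotone_variation_bound[OF assms] by blast
  moreover have "\<And>m::nat. {m..<m+1} = {m}" by auto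
  ultimately show ?thesis
    by (intro exI[of _ 1]) auto
qed

end
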